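(* Let $(F_r)_{r\in\mathbb Z}$ be the Fibonacci numbers and $(\mathcal F_r)_{r\in\mathbb Z}$ any generalized Fibonacci sequence. Then for all integers $r,s$ and every non-negative integer $k$: \[ F_s\sum_{j=0}^kF_{s+1}^{k-j}\mathcal F_{r-1+sj}=\mathcal F_{r+s(k+1)}-F_{s+1}^{k+1}\mathcal F_r, \] \[ \sum_{j=0}^k(-1)^jF_s^{k-j}F_{s+1}^j\mathcal F_{r-k+s+j}=(-1)^kF_{s+1}^{k+1}\mathcal F_r+F_s^{k+1}\mathcal F_{r-k-1}, \] \[ F_s\sum_{j=0}^kF_{s-1}^{k-j}\mathcal F_{r-sk-s+1+sj}=\mathcal F_r-F_{s-1}^{k+1}\mathcal F_{r-(k+1)s}. \]
   Context: A generalized Fibonacci sequence is a two-sided sequence $(\mathcal F_r)_{r\in\mathbb Z}$ of complex numbers with $\mathcal F_r=\mathcal F_{r-1}+\mathcal F_{r-2}$ for all $r\in\mathbb Z$. The Fibonacci numbers $F_r$ are the one with $F_0=0$, $F_1=1$ (extended to negative indices by the recurrence). The convention $0^0=1$ is used. *)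

theory Defs
  imports Complex_Main "HOL-Number_Theory.Fib"
begin

definition gen_fib :: "(int \<Rightarrow> complex) \<Rightarrow> bool" where
  "gen_fib G \<longleftrightarrow> (\<forall>r::int. G r = G (r - 1) + G (r - 2))"

text \<open>Two-sided Fibonacci numbers: F_0 = 0, F_1 = 1, extended to negative indices
  by the recurrence, which gives F_(-n) = (-1)^(n+1) F_n.\<close>
definition fibZ :: "int \<Rightarrow> int" where
  "fibZ r = (if r \<ge> 0 then int (fib (nat r)) else (-1) ^ (nat (-r) + 1) * int (fib (nat (-r))))"

end

theory Submission
  imports Defs
begin

text \<open>Every generalized Fibonacci sequence satisfies the addition law
  \<open>G (n + m) = F\<^sub>m G (n + 1) + F\<^sub>m\<^sub>-\<^sub>1 G n\<close>: both sides obey the Fibonacci recurrence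
  in \<open>m\<close> and agree at \<open>m = 0, 1\<close>. Taking \<open>m = s + 1\<close> resp. \<open>m = s\<close> gives the one-step
  relations \<open>G (x + s) = F\<^sub>s\<^sub>+\<^sub>1 G x + F\<^sub>s G (x - 1)\<close> and
  \<open>G (x + s) = F\<^sub>s G (x + 1) + F\<^sub>s\<^sub>-\<^sub>1 G x\<close>. With these, every summand of the three
  identities is the difference of two consecutive terms of a geometrically weighted shift of
  \<open>G\<close>, so each sum telescopes.\<close>

lemma fibZ_of_nat [simp]: "fibZ (int n) = int (fib n)"
  by (simp add: fibZ_def)

lemma fibZ_minus_of_nat: "fibZ (- int n) = (-1) ^ (n + 1) * int (fib n)"
  by (auto simp: fibZ_def)

lemma fibZ_rec: "fibZ r = fibZ (r - 1) + fibZ (r - 2)"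
proof -
  consider "r \<ge> 2" | "r = 1" | "r = 0" | "r \<le> -1" by linarith
  then show ?thesis
  proof cases
    case 1
    define n where "n = nat (r - 2)"
    with 1 have "r = int (Suc (Suc n))" "r - 1 = int (Suc n)" "r - 2 = int n"
      by simp_all
    then show ?thesis by (simp only: fibZ_of_nat fib.simps(3) of_nat_add)
  next
    case 4
    define n where "n = nat (- r - 1)"
    with 4 have "r = - int (Suc n)" "r - 1 = - int (Suc (Suc n))" "r - 2 = - int (Suc (Suc (Suc n)))"
      by simp_all
    then show ?thesis by (simp only: fibZ_minus_of_nat) (simp add: algebra_simps)
  qed (simp_all add: fibZ_def)
qed

lemma fib_recurrence_unique:
  fixes f g :: "int \<Rightarrow> 'a::ab_group_add"
  assumes "\<And>x. f x = f (x - 1) + f (x - 2)" and "\<And>x. g x = g (x - 1) + g (x - 2)"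
    and "f 0 = g 0" and "f 1 = g 1"
  shows "f x = g x"
proof -
  define h where "h x = f x - g x" for x
  have rec: "h x = h (x - 1) + h (x - 2)" for x
    using assms(1,2)[of x] by (simp add: h_def algebra_simps)
  have "h x = 0 \<and> h (x + 1) = 0"
  proof (induction x rule: int_induct[where k = 0])
    case base
    then show ?case using assms(3,4) by (simp add: h_def)
  next
    case (step1 i)
    then show ?case using rec[of "i + 2"] by (simp add: add.commute)
  next
    case (step2 i)
    then show ?case using rec[of "i + 1"] by auto
  qed
  then show ?thesis by (simp add: h_def)
qed

lemma gen_fib_add:
  assumes "gen_fib G"
  shows "G (n + m) = of_int (fibZ m) * G (n + 1) + of_int (fibZ (m - 1)) * G n"
proof -
  let ?g = "\<lambda>m. of_int (fibZ m) * G (n + 1) + of_int (fibZ (m - 1)) * G n"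
  have "G (n + x) = G (n + x - 1) + G (n + x - 2)" for x
    using assms unfolding gen_fib_def by blast
  moreover have "?g x = ?g (x - 1) + ?g (x - 2)" for x
    using fibZ_rec[of x] fibZ_rec[of "x - 1"] by (simp add: algebra_simps)
  ultimately show ?thesis
    using fib_recurrence_unique[of "\<lambda>m. G (n + m)" ?g] by (simp add: fibZ_def add_diff_eq)
qed

lemma weighted_sum_shift_eq:
  fixes G :: "int \<Rightarrow> 'a::comm_ring_1"
  assumes step: "\<And>x. G (x + s) = a * G x + b * G (x - 1)"
  shows "b * (\<Sum>j=0..k. a ^ (k - j) * G (r - 1 + s * int j))
       = G (r + s * (int k + 1)) - a ^ (k + 1) * G r"
proof -
  define W where "W j = a ^ (k + 1 - j) * G (r + s * int j)" for j
  have "b * (a ^ (k - j) * G (r - 1 + s * int j)) = W (Suc j) - W j" if "j \<le> k" for j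
  proof -
    have "k + 1 - j = Suc (k - j)" "k + 1 - Suc j = k - j" using that by auto
    moreover have "G (r + s * int (Suc j)) = a * G (r + s * int j) + b * G (r - 1 + s * int j)"
      using step[of "r + s * int j"] by (simp add: algebra_simps)
    ultimately show ?thesis by (simp add: W_def algebra_simps)
  qed
  then have "b * (\<Sum>j=0..k. a ^ (k - j) * G (r - 1 + s * int j)) = (\<Sum>j=0..k. W (Suc j) - W j)"
    by (simp add: sum_distrib_left)
  also have "\<dots> = W (Suc k) - W 0"
    by (rule sum_Suc_diff) simp
  finally show ?thesis by (simp add: W_def algebra_simps)
qed

lemma alternating_weighted_sum_shift_eq:
  fixes G :: "int \<Rightarrow> 'a::comm_ring_1"
  assumes step: "\<And>x. G (x + s) = a * G x + b * G (x - 1)"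
  shows "(\<Sum>j=0..k. (-1) ^ j * b ^ (k - j) * a ^ j * G (r - int k + s + int j))
       = (-1) ^ k * a ^ (k + 1) * G r + b ^ (k + 1) * G (r - int k - 1)"
proof -
  define U where "U j = - ((-1) ^ j * b ^ (k + 1 - j) * a ^ j * G (r - int k - 1 + int j))" for j
  have "(-1) ^ j * b ^ (k - j) * a ^ j * G (r - int k + s + int j) = U (Suc j) - U j"
    if "j \<le> k" for j
  proof -
    have "k + 1 - j = Suc (k - j)" "k + 1 - Suc j = k - j" using that by auto
    moreover have "G (r - int k + s + int j)
        = a * G (r - int k + int j) + b * G (r - int k - 1 + int j)"
      using step[of "r - int k + int j"] by (simp add: algebra_simps)
    ultimately show ?thesis by (simp add: U_def algebra_simps)
  qed
  then have "(\<Sum>j=0..k. (-1) ^ j * b ^ (k - j) * a ^ j * G (r - int k + s + int j))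
      = (\<Sum>j=0..k. U (Suc j) - U j)"
    by simp
  also have "\<dots> = U (Suc k) - U 0"
    by (rule sum_Suc_diff) simp
  finally show ?thesis by (simp add: U_def algebra_simps)
qed

lemma weighted_sum_shift_eq_backward:
  fixes G :: "int \<Rightarrow> 'a::comm_ring_1"
  assumes step: "\<And>x. G (x + s) = b * G (x + 1) + c * G x"
  shows "b * (\<Sum>j=0..k. c ^ (k - j) * G (r - s * int k - s + 1 + s * int j))
       = G r - c ^ (k + 1) * G (r - (int k + 1) * s)"
proof -
  define V where "V j = c ^ (k + 1 - j) * G (r - s * int k - s + s * int j)" for j
  have "b * (c ^ (k - j) * G (r - s * int k - s + 1 + s * int j)) = V (Suc j) - V j"
    if "j \<le> k" for j
  proof -
    have "k + 1 - j = Suc (k - j)" "k + 1 - Suc j = k - j" using that by auto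
    moreover have "G (r - s * int k - s + s * int (Suc j))
        = b * G (r - s * int k - s + 1 + s * int j) + c * G (r - s * int k - s + s * int j)"
      using step[of "r - s * int k - s + s * int j"] by (simp add: algebra_simps)
    ultimately show ?thesis by (simp add: V_def algebra_simps)
  qed
  then have "b * (\<Sum>j=0..k. c ^ (k - j) * G (r - s * int k - s + 1 + s * int j))
      = (\<Sum>j=0..k. V (Suc j) - V j)"
    by (simp add: sum_distrib_left)
  also have "\<dots> = V (Suc k) - V 0"
    by (rule sum_Suc_diff) simp
  also have "\<dots> = G r - c ^ (k + 1) * G (r - (int k + 1) * s)"
    unfolding V_def by (simp add: algebra_simps)
  finally show ?thesis .
qed

theorem mainTheorem6:
  fixes G :: "int \<Rightarrow> complex" and r s :: int and k :: nat
  assumes "gen_fib G"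
  shows "(of_int (fibZ s) * (\<Sum>j=0..k. of_int (fibZ (s + 1)) ^ (k - j) * G (r - 1 + s * int j))
           = G (r + s * (int k + 1)) - of_int (fibZ (s + 1)) ^ (k + 1) * G r) \<and>
         ((\<Sum>j=0..k. (-1) ^ j * of_int (fibZ s) ^ (k - j) * of_int (fibZ (s + 1)) ^ j
              * G (r - int k + s + int j))
           = (-1) ^ k * of_int (fibZ (s + 1)) ^ (k + 1) * G r + of_int (fibZ s) ^ (k + 1) * G (r - int k - 1)) \<and>
         (of_int (fibZ s) * (\<Sum>j=0..k. of_int (fibZ (s - 1)) ^ (k - j) * G (r - s * int k - s + 1 + s * int j))
           = G r - of_int (fibZ (s - 1)) ^ (k + 1) * G (r - (int k + 1) * s))"
proof -
  have forward: "G (x + s) = of_int (fibZ (s + 1)) * G x + of_int (fibZ s) * G (x - 1)" for x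
    using gen_fib_add[OF assms, of "x - 1" "s + 1"] by simp
  have backward: "G (x + s) = of_int (fibZ s) * G (x + 1) + of_int (fibZ (s - 1)) * G x" for x
    using gen_fib_add[OF assms, of x s] by simp
  show ?thesis
    using weighted_sum_shift_eq[OF forward] alternating_weighted_sum_shift_eq[OF forward]
      weighted_sum_shift_eq_backward[OF backward]
    by blast
qed

end
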